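(* Let $-\infty \le \alpha < \beta \le \infty$ and let $A \colon (\alpha,\beta) \to \mathbb{R}^{N\times N}$ have locally integrable entries $a_{ij}(\cdot)$, such that for every $t \in (\alpha,\beta)$ the matrix $A(t)$ has all off-diagonal entries nonnegative. Consider the system $x' = A(t)x$, $t\in(\alpha,\beta)$. Then for each $t_0 \in (\alpha,\beta)$ and each $x_0 \in \mathbb{R}^N_{++}$, writing the (Carath\'eodory) solution with $x(t_0)=x_0$ as $x(t) = (x_1(t),\dots,x_N(t))^{T}$, the inequality \[ \prod_{i=1}^N x_i(t) \ge \exp\biggl( \int_{t_0}^{t} \Bigl( \operatorname{tr} A(\tau) + 2\sum_{1\le j<k\le N} \sqrt{a_{jk}(\tau)\,a_{kj}(\tau)} \Bigr)\, d\tau \biggr) \prod_{i=1}^N x_i(t_0) \] holds for all $t \in (t_0,\beta)$.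
   Context: $\mathbb{R}^N_{++}$ denotes the set of vectors in $\mathbb{R}^N$ with all coordinates strictly positive. A (Carath\'eodory) solution of $x'=A(t)x$ with $x(t_0)=x_0$ is a function $x\colon(\alpha,\beta)\to\mathbb{R}^N$, absolutely continuous on every compact subinterval, with $x(t_0)=x_0$, satisfying the equation for Lebesgue-a.e. $t\in(\alpha,\beta)$; it exists and is unique. *)

theory Defs
  imports "HOL-Analysis.Analysis"
begin

definition abs_cont_on :: "real set \<Rightarrow> (real \<Rightarrow> 'a::real_normed_vector) \<Rightarrow> bool" where
  "abs_cont_on S f \<longleftrightarrow>
     (\<forall>e>0. \<exists>d>0. \<forall>(I::nat set) u v.
        finite I \<and> (\<forall>i\<in>I. u i \<le> v i \<and> {u i..v i} \<subseteq> S)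
        \<and> disjoint_family_on (\<lambda>i. {u i<..<v i}) I
        \<and> (\<Sum>i\<in>I. v i - u i) < d
        \<longrightarrow> (\<Sum>i\<in>I. norm (f (v i) - f (u i))) < e)"

definition open_ivl :: "ereal \<Rightarrow> ereal \<Rightarrow> real set" where
  "open_ivl \<alpha> \<beta> = {t. \<alpha> < ereal t \<and> ereal t < \<beta>}"

definition caratheodory_solution ::
  "ereal \<Rightarrow> ereal \<Rightarrow> (real \<Rightarrow> real^'n^'n) \<Rightarrow> real \<Rightarrow> real^'n \<Rightarrow> (real \<Rightarrow> real^'n) \<Rightarrow> bool" where
  "caratheodory_solution \<alpha> \<beta> A t0 x0 x \<longleftrightarrow>
     x t0 = x0
     \<and> (\<forall>a b. {a..b} \<subseteq> open_ivl \<alpha> \<beta> \<longrightarrow> abs_cont_on {a..b} x)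
     \<and> (AE t in lebesgue. t \<in> open_ivl \<alpha> \<beta> \<longrightarrow> (x has_vector_derivative (A t *v x t)) (at t))"

end

(*
  Along the solution every component stays positive: off the null set where the equation fails,
  the Metzler property gives (ln x_i)' >= a_ii, and integrating this bounds x_i from below by
  x_i(t0) * exp (- integral |a_ii|) on every interval on which the solution is still positive,
  so no component can reach 0. Then
    (sum_i ln x_i)' = sum_i (A x)_i / x_i = tr A + sum_{j<k} (a_jk x_k / x_j + a_kj x_j / x_k)
                    >= tr A + 2 sum_{j<k} sqrt (a_jk a_kj)
  by AM-GM, and integrating gives the bound for the product. Both integrations use that an
  almost-everywhere lower bound for the derivative of an absolutely continuous function
  integrates to a lower bound for its increment, proved directly with gauge integrals.
*)
theory Submission
  imports Defs
begin

hide_const (open) Polynomial.content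

section \<open>Absolutely continuous functions\<close>

definition nonoverlapping_subintervals :: "real set \<Rightarrow> 'i set \<Rightarrow> ('i \<Rightarrow> real) \<Rightarrow> ('i \<Rightarrow> real) \<Rightarrow> bool" where
  "nonoverlapping_subintervals S I u v \<longleftrightarrow>
     finite I \<and> (\<forall>i\<in>I. u i \<le> v i \<and> {u i..v i} \<subseteq> S) \<and> disjoint_family_on (\<lambda>i. {u i<..<v i}) I"

lemma abs_cont_on_altdef:
  "abs_cont_on S f \<longleftrightarrow>
     (\<forall>e>0. \<exists>d>0. \<forall>(I::nat set) u v. nonoverlapping_subintervals S I u v \<and> (\<Sum>i\<in>I. v i - u i) < d
        \<longrightarrow> (\<Sum>i\<in>I. norm (f (v i) - f (u i))) < e)"
  unfolding abs_cont_on_def nonoverlapping_subintervals_def by meson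

lemma nonoverlapping_subintervals_reindex:
  assumes "nonoverlapping_subintervals S I u v" and "inj_on g J" and "g ` J = I"
  shows "nonoverlapping_subintervals S J (u \<circ> g) (v \<circ> g)"
  using assms unfolding nonoverlapping_subintervals_def disjoint_family_on_def
  by (auto simp: finite_image_iff inj_on_eq_iff)

text \<open>The definition only speaks about families indexed by sets of naturals; any finite family
  can be re-indexed by an initial segment of the naturals.\<close>
lemma abs_cont_onE:
  assumes "abs_cont_on S f" and "e > 0"
  obtains d where "d > 0"
    and "\<And>(I::'i set) u v. nonoverlapping_subintervals S I u v \<Longrightarrow> (\<Sum>i\<in>I. v i - u i) < d \<Longrightarrow>
           (\<Sum>i\<in>I. norm (f (v i) - f (u i))) < e"
proof -
  obtain d where "d > 0" and d: "\<And>(I::nat set) u v. nonoverlapping_subintervals S I u v \<Longrightarrow>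
      (\<Sum>i\<in>I. v i - u i) < d \<Longrightarrow> (\<Sum>i\<in>I. norm (f (v i) - f (u i))) < e"
    using assms unfolding abs_cont_on_altdef by meson
  show ?thesis
  proof (rule that[OF \<open>d > 0\<close>])
    fix I :: "'i set" and u v
    assume I: "nonoverlapping_subintervals S I u v" and small: "(\<Sum>i\<in>I. v i - u i) < d"
    then have "finite I" by (simp add: nonoverlapping_subintervals_def)
    then obtain g where g: "bij_betw g {0..<card I} I" using ex_bij_betw_nat_finite by blast
    then have inj: "inj_on g {0..<card I}" and img: "g ` {0..<card I} = I" by (auto simp: bij_betw_def)
    note reindex = sum.reindex_bij_betw[OF g, symmetric]
    have "(\<Sum>i\<in>{0..<card I}. norm (f ((v \<circ> g) i) - f ((u \<circ> g) i))) < e"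
      using nonoverlapping_subintervals_reindex[OF I inj img] small by (intro d) (auto simp: reindex comp_def)
    then show "(\<Sum>i\<in>I. norm (f (v i) - f (u i))) < e" by (simp add: reindex)
  qed
qed

lemma abs_cont_on_subset: "abs_cont_on S f \<Longrightarrow> T \<subseteq> S \<Longrightarrow> abs_cont_on T f"
  unfolding abs_cont_on_def by (meson order_trans)

lemma abs_cont_on_imp_continuous_on:
  fixes f :: "real \<Rightarrow> 'a::real_normed_vector"
  assumes f: "abs_cont_on {a..b} f"
  shows "continuous_on {a..b} f"
  unfolding continuous_on_iff
proof (intro ballI allI impI)
  fix s e assume s: "s \<in> {a..b}" and "(0::real) < e"
  obtain d where "d > 0" and d: "\<And>(I::unit set) u v. nonoverlapping_subintervals {a..b} I u v \<Longrightarrow>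
      (\<Sum>i\<in>I. v i - u i) < d \<Longrightarrow> (\<Sum>i\<in>I. norm (f (v i) - f (u i))) < e"
    by (rule abs_cont_onE[OF f \<open>0 < e\<close>]) blast
  show "\<exists>d>0. \<forall>r\<in>{a..b}. dist r s < d \<longrightarrow> dist (f r) (f s) < e"
  proof (intro exI[of _ d] conjI ballI impI)
    fix r assume r: "r \<in> {a..b}" and "dist r s < d"
    then have "norm (f (max r s) - f (min r s)) < e"
      using s d[of "{()}" "\<lambda>_. min r s" "\<lambda>_. max r s"]
      by (auto simp: nonoverlapping_subintervals_def disjoint_family_on_def dist_real_def)
    then show "dist (f r) (f s) < e"
      by (cases "r \<le> s") (auto simp: dist_norm norm_minus_commute max_def min_def)
  qed (fact \<open>d > 0\<close>)
qed

lemma abs_cont_on_dominated: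
  fixes f :: "real \<Rightarrow> 'a::real_normed_vector" and g :: "real \<Rightarrow> 'b::real_normed_vector"
  assumes f: "abs_cont_on S f" and L: "L \<ge> 0"
    and dom: "\<And>u v. u \<in> S \<Longrightarrow> v \<in> S \<Longrightarrow> norm (g v - g u) \<le> L * norm (f v - f u)"
  shows "abs_cont_on S g"
  unfolding abs_cont_on_altdef
proof (intro allI impI)
  fix e :: real assume "e > 0"
  then have "e / (L + 1) > 0" using L by simp
  then obtain d where "d > 0" and d: "\<And>(I::nat set) u v. nonoverlapping_subintervals S I u v \<Longrightarrow>
      (\<Sum>i\<in>I. v i - u i) < d \<Longrightarrow> (\<Sum>i\<in>I. norm (f (v i) - f (u i))) < e / (L + 1)"
    by (rule abs_cont_onE[OF f]) blast
  have "(\<Sum>i\<in>I. norm (g (v i) - g (u i))) < e"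
    if I: "nonoverlapping_subintervals S I u v" and small: "(\<Sum>i\<in>I. v i - u i) < d"
    for I :: "nat set" and u v
  proof -
    have "(\<Sum>i\<in>I. norm (g (v i) - g (u i))) \<le> (\<Sum>i\<in>I. L * norm (f (v i) - f (u i)))"
      using I by (intro sum_mono dom) (fastforce simp: nonoverlapping_subintervals_def)+
    also have "\<dots> = L * (\<Sum>i\<in>I. norm (f (v i) - f (u i)))" by (simp add: sum_distrib_left)
    also have "\<dots> \<le> L * (e / (L + 1))" using d[OF I small] L by (intro mult_left_mono) auto
    also have "\<dots> < e" using L \<open>e > 0\<close> by (simp add: field_simps)
    finally show ?thesis .
  qed
  then show "\<exists>d>0. \<forall>(I::nat set) u v. nonoverlapping_subintervals S I u v \<and> (\<Sum>i\<in>I. v i - u i) < d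
          \<longrightarrow> (\<Sum>i\<in>I. norm (g (v i) - g (u i))) < e"
    using \<open>d > 0\<close> by blast
qed

lemma abs_cont_on_add:
  fixes f g :: "real \<Rightarrow> 'a::real_normed_vector"
  assumes f: "abs_cont_on S f" and g: "abs_cont_on S g"
  shows "abs_cont_on S (\<lambda>s. f s + g s)"
  unfolding abs_cont_on_altdef
proof (intro allI impI)
  fix e :: real assume "e > 0"
  then have "e / 2 > 0" by simp
  obtain d1 where "d1 > 0" and d1: "\<And>(I::nat set) u v. nonoverlapping_subintervals S I u v \<Longrightarrow>
      (\<Sum>i\<in>I. v i - u i) < d1 \<Longrightarrow> (\<Sum>i\<in>I. norm (f (v i) - f (u i))) < e / 2"
    by (rule abs_cont_onE[OF f \<open>e / 2 > 0\<close>]) blast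
  obtain d2 where "d2 > 0" and d2: "\<And>(I::nat set) u v. nonoverlapping_subintervals S I u v \<Longrightarrow>
      (\<Sum>i\<in>I. v i - u i) < d2 \<Longrightarrow> (\<Sum>i\<in>I. norm (g (v i) - g (u i))) < e / 2"
    by (rule abs_cont_onE[OF g \<open>e / 2 > 0\<close>]) blast
  have "(\<Sum>i\<in>I. norm (f (v i) + g (v i) - (f (u i) + g (u i)))) < e"
    if I: "nonoverlapping_subintervals S I u v" and small: "(\<Sum>i\<in>I. v i - u i) < min d1 d2"
    for I :: "nat set" and u v
  proof -
    have "(\<Sum>i\<in>I. norm (f (v i) + g (v i) - (f (u i) + g (u i))))
        \<le> (\<Sum>i\<in>I. norm (f (v i) - f (u i)) + norm (g (v i) - g (u i)))"
      by (intro sum_mono norm_diff_triangle_ineq)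
    also have "\<dots> < e / 2 + e / 2"
      unfolding sum.distrib using d1[OF I] d2[OF I] small by (intro add_strict_mono) auto
    finally show ?thesis by simp
  qed
  then show "\<exists>d>0. \<forall>(I::nat set) u v. nonoverlapping_subintervals S I u v \<and> (\<Sum>i\<in>I. v i - u i) < d
          \<longrightarrow> (\<Sum>i\<in>I. norm (f (v i) + g (v i) - (f (u i) + g (u i)))) < e"
    using \<open>d1 > 0\<close> \<open>d2 > 0\<close> by (intro exI[of _ "min d1 d2"]) auto
qed

lemma abs_cont_on_const: "abs_cont_on S (\<lambda>s. c)"
  unfolding abs_cont_on_def by (intro allI impI exI[of _ 1]) auto

lemma abs_cont_on_sum:
  fixes f :: "'i \<Rightarrow> real \<Rightarrow> 'a::real_normed_vector"
  assumes "finite I" and "\<And>i. i \<in> I \<Longrightarrow> abs_cont_on S (f i)"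
  shows "abs_cont_on S (\<lambda>s. \<Sum>i\<in>I. f i s)"
  using assms by (induction I rule: finite_induct) (auto intro: abs_cont_on_const abs_cont_on_add)

lemma abs_cont_on_vec_nth:
  fixes x :: "real \<Rightarrow> real^'n"
  assumes "abs_cont_on S x"
  shows "abs_cont_on S (\<lambda>s. x s $ i)"
proof (rule abs_cont_on_dominated[OF assms, of 1])
  show "norm (x v $ i - x u $ i) \<le> 1 * norm (x v - x u)" for u v
    using component_le_norm_cart[of "x v - x u" i] by simp
qed simp

lemma abs_ln_diff_le:
  fixes m y z :: real
  assumes "m > 0" and "m \<le> y" and "m \<le> z"
  shows "\<bar>ln y - ln z\<bar> \<le> \<bar>y - z\<bar> / m"
proof -
  have "ln u - ln v \<le> \<bar>u - v\<bar> / m" if "m \<le> u" "m \<le> v" for u v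
  proof -
    have "ln u - ln v = ln (u / v)" using that \<open>m > 0\<close> by (simp add: ln_div)
    also have "\<dots> \<le> (u - v) / v" using that \<open>m > 0\<close> ln_le_minus_one[of "u / v"] by (simp add: field_simps)
    also have "\<dots> \<le> \<bar>u - v\<bar> / m" using that \<open>m > 0\<close> by (intro frac_le) auto
    finally show ?thesis .
  qed
  from this[of y z] this[of z y] show ?thesis using assms by (simp add: abs_le_iff abs_minus_commute)
qed

lemma abs_cont_on_ln:
  fixes f :: "real \<Rightarrow> real"
  assumes f: "abs_cont_on {a..b} f" and pos: "\<And>s. s \<in> {a..b} \<Longrightarrow> f s > 0"
  shows "abs_cont_on {a..b} (\<lambda>s. ln (f s))"
proof -
  obtain m where "m > 0" and m: "\<And>s. s \<in> {a..b} \<Longrightarrow> m \<le> f s"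
  proof (cases "a \<le> b")
    case True
    then obtain s0 where "s0 \<in> {a..b}" "\<And>s. s \<in> {a..b} \<Longrightarrow> f s0 \<le> f s"
      using continuous_attains_inf[OF compact_Icc _ abs_cont_on_imp_continuous_on[OF f]] by auto
    then show ?thesis using that pos by blast
  qed (use that[of 1] in auto)
  show ?thesis
  proof (rule abs_cont_on_dominated[OF f, of "1 / m"])
    show "norm (ln (f v) - ln (f u)) \<le> 1 / m * norm (f v - f u)" if "u \<in> {a..b}" "v \<in> {a..b}" for u v
      using abs_ln_diff_le[OF \<open>m > 0\<close> m[OF that(2)] m[OF that(1)]] by simp
  qed (use \<open>m > 0\<close> in simp)
qed

section \<open>Metzler matrices\<close>

lemma sum_pairs_split_diagonal:
  fixes c :: "'n::{finite,linorder} \<times> 'n \<Rightarrow> 'a::comm_monoid_add"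
  shows "(\<Sum>p\<in>UNIV. c p) = (\<Sum>i\<in>UNIV. c (i, i)) + (\<Sum>(j, k)\<in>{(j, k). j < k}. c (j, k) + c (k, j))"
proof -
  let ?D = "{(j, k). j = k}" and ?L = "{(j, k). j < k}" and ?U = "{(j::'n, k). k < j}"
  have "(UNIV :: ('n \<times> 'n) set) = ?D \<union> ?L \<union> ?U" by (auto simp: not_less_iff_gr_or_eq)
  then have "(\<Sum>p\<in>UNIV. c p) = (\<Sum>p\<in>?D \<union> ?L \<union> ?U. c p)" by simp
  also have "\<dots> = (\<Sum>p\<in>?D \<union> ?L. c p) + (\<Sum>p\<in>?U. c p)"
    by (rule sum.union_disjoint) auto
  also have "(\<Sum>p\<in>?D \<union> ?L. c p) = (\<Sum>p\<in>?D. c p) + (\<Sum>p\<in>?L. c p)"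
    by (rule sum.union_disjoint) auto
  also have "(\<Sum>p\<in>?D. c p) = (\<Sum>i\<in>UNIV. c (i, i))"
    by (rule sum.reindex_bij_witness[of _ "\<lambda>i. (i, i)" fst]) auto
  also have "(\<Sum>p\<in>?U. c p) = (\<Sum>(j, k)\<in>?L. c (k, j))"
    by (rule sum.reindex_bij_witness[of _ prod.swap prod.swap]) auto
  finally show ?thesis by (simp add: sum.distrib split_def add.assoc)
qed

lemma metzler_diag_le_quotient:
  fixes M :: "real^'n^'n" and y :: "real^'n"
  assumes y: "\<And>j. y $ j > 0" and off: "\<And>j. j \<noteq> i \<Longrightarrow> M $ i $ j \<ge> 0"
  shows "M $ i $ i \<le> (M *v y) $ i / y $ i"
proof -
  have "M $ i $ i * y $ i \<le> M $ i $ i * y $ i + (\<Sum>j\<in>UNIV - {i}. M $ i $ j * y $ j)"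
    using off y by (intro add_increasing2 sum_nonneg mult_nonneg_nonneg) (auto intro: less_imp_le)
  also have "\<dots> = (M *v y) $ i"
    by (simp add: matrix_vector_mult_def sum.remove)
  finally show ?thesis using y[of i] by (simp add: pos_le_divide_eq)
qed

definition growth_bound :: "real^'n::{finite,linorder}^'n::{finite,linorder} \<Rightarrow> real" where
  "growth_bound M = trace M + 2 * (\<Sum>(j, k)\<in>{(j, k). j < k}. sqrt (M $ j $ k * M $ k $ j))"

lemma growth_bound_le_sum_quotients:
  fixes M :: "real^'n::{finite,linorder}^'n::{finite,linorder}" and y :: "real^'n::{finite,linorder}"
  assumes y: "\<And>i. y $ i > 0" and off: "\<And>i j. i \<noteq> j \<Longrightarrow> M $ i $ j \<ge> 0"
  shows "growth_bound M \<le> (\<Sum>i\<in>UNIV. (M *v y) $ i / y $ i)"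
proof -
  define c where "c = (\<lambda>(j, k). M $ j $ k * y $ k / y $ j)"
  have "(\<Sum>i\<in>UNIV. (M *v y) $ i / y $ i) = (\<Sum>p\<in>UNIV. c p)"
    by (simp add: matrix_vector_mult_def c_def sum_divide_distrib sum.cartesian_product)
  also have "\<dots> = trace M + (\<Sum>(j, k)\<in>{(j, k). j < k}. c (j, k) + c (k, j))"
    using y by (simp add: sum_pairs_split_diagonal c_def trace_def less_imp_neq[symmetric])
  finally have sum_eq: "(\<Sum>i\<in>UNIV. (M *v y) $ i / y $ i) = \<dots>" .
  have "2 * sqrt (M $ j $ k * M $ k $ j) \<le> c (j, k) + c (k, j)" if "j < k" for j k
  proof -
    have "c (j, k) * c (k, j) = M $ j $ k * M $ k $ j"
      using y[of j] y[of k] by (simp add: c_def field_simps)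
    moreover have "c (j, k) \<ge> 0" "c (k, j) \<ge> 0"
      using off y[of j] y[of k] that by (auto simp: c_def)
    ultimately show ?thesis using arith_geo_mean_sqrt[of "c (j, k)" "c (k, j)"] by simp
  qed
  then have "2 * (\<Sum>(j, k)\<in>{(j, k). j < k}. sqrt (M $ j $ k * M $ k $ j))
      \<le> (\<Sum>(j, k)\<in>{(j, k). j < k}. c (j, k) + c (k, j))"
    unfolding sum_distrib_left by (intro sum_mono) auto
  then show ?thesis unfolding sum_eq growth_bound_def by simp
qed

section \<open>Integrating a lower bound for the derivative\<close>

lemma tagged_division_of_realD:
  fixes a b :: real
  assumes "p tagged_division_of {a..b}" and "(x, K) \<in> p"
  shows "K = {Inf K..Sup K}" and "Inf K \<le> x" and "x \<le> Sup K" and "K \<subseteq> {a..b}"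
    and "content K = Sup K - Inf K" and "interior K = {Inf K<..<Sup K}"
proof -
  obtain u v where K: "K = {u..v}"
    using tagged_division_ofD(4)[OF assms] by (metis box_real(2))
  moreover have "x \<in> K" "K \<subseteq> {a..b}"
    using tagged_division_ofD(2,3)[OF assms] by auto
  ultimately show "K = {Inf K..Sup K}" "Inf K \<le> x" "x \<le> Sup K" "K \<subseteq> {a..b}"
    "content K = Sup K - Inf K" "interior K = {Inf K<..<Sup K}"
    by auto
qed

text \<open>The tags lying in a null set carry intervals of small total length, so absolute
  continuity makes their contribution to a Riemann sum of increments small.\<close>
lemma abs_cont_on_gauge_negligible:
  fixes F :: "real \<Rightarrow> 'a::real_normed_vector"
  assumes F: "abs_cont_on {a..b} F" and N: "negligible N" and "e > 0"
  obtains \<gamma> where "gauge \<gamma>"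
    and "\<And>p. p tagged_division_of {a..b} \<Longrightarrow> \<gamma> fine p \<Longrightarrow>
           (\<Sum>(x, K)\<in>p. if x \<in> N then norm (F (Sup K) - F (Inf K)) else 0) < e"
proof -
  obtain d where "d > 0" and d: "\<And>(I::(real \<times> real set) set) u v. nonoverlapping_subintervals {a..b} I u v \<Longrightarrow>
      (\<Sum>i\<in>I. v i - u i) < d \<Longrightarrow> (\<Sum>i\<in>I. norm (F (v i) - F (u i))) < e"
    by (rule abs_cont_onE[OF F \<open>e > 0\<close>]) blast
  have "(indicator N has_integral (0::real)) {a..b}"
    using N unfolding negligible_def by (metis box_real(2))
  from this[unfolded has_integral_real, rule_format, OF \<open>d > 0\<close>]
  obtain \<gamma> where "gauge \<gamma>" and \<gamma>: "\<forall>p. p tagged_division_of {a..b} \<and> \<gamma> fine p \<longrightarrow>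
      norm ((\<Sum>(x, K)\<in>p. content K *\<^sub>R (indicator N x :: real)) - 0) < d"
    by (elim exE conjE)
  show ?thesis
  proof (rule that[OF \<open>gauge \<gamma>\<close>])
    fix p assume p: "p tagged_division_of {a..b}" and fine: "\<gamma> fine p"
    let ?pN = "{i \<in> p. fst i \<in> N}"
    have "finite p" using p by blast
    note tag = tagged_division_of_realD[OF p]
    have "(\<Sum>i\<in>?pN. Sup (snd i) - Inf (snd i)) = (\<Sum>(x, K)\<in>p. content K * indicator N x)"
      using \<open>finite p\<close> tag(5) by (auto simp: sum.inter_filter indicator_def intro!: sum.cong)
    then have small: "(\<Sum>i\<in>?pN. Sup (snd i) - Inf (snd i)) < d"
      using \<gamma>[rule_format, OF conjI[OF p fine]] by simp
    have pN: "nonoverlapping_subintervals {a..b} ?pN (\<lambda>i. Inf (snd i)) (\<lambda>i. Sup (snd i))"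
      unfolding nonoverlapping_subintervals_def disjoint_family_on_def
    proof (intro conjI ballI impI)
      show "finite ?pN" using \<open>finite p\<close> by simp
      show "Inf (snd i) \<le> Sup (snd i)" and "{Inf (snd i)..Sup (snd i)} \<subseteq> {a..b}" if "i \<in> ?pN" for i
      proof -
        have "(fst i, snd i) \<in> p" using that by simp
        from tag(1-4)[OF this] show "Inf (snd i) \<le> Sup (snd i)" "{Inf (snd i)..Sup (snd i)} \<subseteq> {a..b}"
          by auto
      qed
      show "{Inf (snd i)<..<Sup (snd i)} \<inter> {Inf (snd j)<..<Sup (snd j)} = {}"
        if "i \<in> ?pN" "j \<in> ?pN" "i \<noteq> j" for i j
        using that tagged_division_ofD(5)[OF p, of "fst i" "snd i" "fst j" "snd j"] tag(6)
        by (metis (no_types, lifting) mem_Collect_eq prod.collapse)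
    qed
    from d[OF pN small]
    show "(\<Sum>(x, K)\<in>p. if x \<in> N then norm (F (Sup K) - F (Inf K)) else 0) < e"
      using \<open>finite p\<close> by (simp add: sum.inter_filter split_def)
  qed
qed

lemma has_real_derivative_gauge:
  fixes F F' :: "real \<Rightarrow> real"
  assumes deriv: "\<And>t. t \<in> S \<Longrightarrow> (F has_real_derivative F' t) (at t within T)" and "e > 0"
  obtains \<gamma> where "gauge \<gamma>"
    and "\<And>t u v. t \<in> S \<Longrightarrow> u \<le> t \<Longrightarrow> t \<le> v \<Longrightarrow> {u..v} \<subseteq> T \<inter> \<gamma> t \<Longrightarrow>
           (F' t - e) * (v - u) \<le> F v - F u"
proof -
  have "\<exists>d>0. \<forall>y\<in>T. norm (y - t) < d \<longrightarrow> norm (F y - F t - F' t * (y - t)) \<le> e * norm (y - t)"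
    if "t \<in> S" for t
    using deriv[OF that] \<open>e > 0\<close> unfolding has_field_derivative_def has_derivative_within_alt by blast
  then obtain d where d: "\<And>t. t \<in> S \<Longrightarrow> d t > 0"
    and approx: "\<And>t y. t \<in> S \<Longrightarrow> y \<in> T \<Longrightarrow> \<bar>y - t\<bar> < d t \<Longrightarrow> \<bar>F y - F t - F' t * (y - t)\<bar> \<le> e * \<bar>y - t\<bar>"
    by (metis real_norm_def)
  show ?thesis
  proof (rule that[of "\<lambda>t. ball t (if t \<in> S then d t else 1)"])
    show "gauge (\<lambda>t. ball t (if t \<in> S then d t else 1))"
      using d by (intro gauge_ball_dependent) simp
    fix t u v
    assume t: "t \<in> S" and "u \<le> t" "t \<le> v"
      and "{u..v} \<subseteq> T \<inter> ball t (if t \<in> S then d t else 1)"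
    then have uv: "{u..v} \<subseteq> T \<inter> ball t (d t)" and "u \<in> {u..v}" "v \<in> {u..v}" by auto
    then have "u \<in> T" "v \<in> T" "\<bar>u - t\<bar> < d t" "\<bar>v - t\<bar> < d t"
      by (blast, blast, (metis Int_iff dist_real_def mem_ball subsetD abs_minus_commute)+)
    then have "F' t * (v - t) - e * (v - t) \<le> F v - F t" "F u - F t \<le> F' t * (u - t) + e * (t - u)"
      using approx[OF t \<open>u \<in> T\<close>] approx[OF t \<open>v \<in> T\<close>] \<open>u \<le> t\<close> \<open>t \<le> v\<close>
      by (auto simp: abs_le_iff)
    then show "(F' t - e) * (v - u) \<le> F v - F u"
      by (simp add: algebra_simps)
  qed
qed

text \<open>Off the null set the increment over a tagged interval is controlled by the derivative
  at the tag; on it, by absolute continuity.\<close>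
lemma has_integral_le_increment:
  fixes F F' h :: "real \<Rightarrow> real"
  assumes "a \<le> b" and F: "abs_cont_on {a..b} F" and N: "negligible N"
    and deriv: "\<And>t. t \<in> {a..b} - N \<Longrightarrow> (F has_real_derivative F' t) (at t within {a..b})"
    and le: "\<And>t. t \<in> {a..b} - N \<Longrightarrow> h t \<le> F' t"
    and h: "(h has_integral I) {a..b}"
  shows "I \<le> F b - F a"
proof (rule field_le_epsilon)
  fix e :: real assume "e > 0"
  define \<epsilon> where "\<epsilon> = e / (b - a + 2)"
  have "\<epsilon> > 0" and "\<epsilon> * (b - a + 2) = e"
    using \<open>e > 0\<close> \<open>a \<le> b\<close> by (auto simp: \<epsilon>_def)
  then have e_eq: "\<epsilon> + \<epsilon> * (b - a) + \<epsilon> = e" by (simp add: algebra_simps)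
  define h' where "h' t = (if t \<in> N then 0 else h t)" for t
  have "(h' has_integral I) {a..b}"
    by (rule has_integral_spike[OF N _ h]) (simp add: h'_def)
  from this[unfolded has_integral_real, rule_format, OF \<open>\<epsilon> > 0\<close>]
  obtain \<gamma>1 where "gauge \<gamma>1" and \<gamma>1: "\<forall>p. p tagged_division_of {a..b} \<and> \<gamma>1 fine p \<longrightarrow>
      norm ((\<Sum>(x, K)\<in>p. content K *\<^sub>R h' x) - I) < \<epsilon>"
    by (elim exE conjE)
  obtain \<gamma>2 where "gauge \<gamma>2" and \<gamma>2: "\<And>p. p tagged_division_of {a..b} \<Longrightarrow> \<gamma>2 fine p \<Longrightarrow>
      (\<Sum>(x, K)\<in>p. if x \<in> N then norm (F (Sup K) - F (Inf K)) else 0) < \<epsilon>"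
    by (rule abs_cont_on_gauge_negligible[OF F N \<open>\<epsilon> > 0\<close>]) blast
  obtain \<gamma>3 where "gauge \<gamma>3" and \<gamma>3: "\<And>t u v. t \<in> {a..b} - N \<Longrightarrow> u \<le> t \<Longrightarrow> t \<le> v \<Longrightarrow>
      {u..v} \<subseteq> {a..b} \<inter> \<gamma>3 t \<Longrightarrow> (F' t - \<epsilon>) * (v - u) \<le> F v - F u"
    using has_real_derivative_gauge[OF deriv \<open>\<epsilon> > 0\<close>] by metis
  obtain p where p: "p tagged_division_of {a..b}" and "(\<lambda>t. \<gamma>1 t \<inter> \<gamma>2 t \<inter> \<gamma>3 t) fine p"
    using fine_division_exists_real \<open>gauge \<gamma>1\<close> \<open>gauge \<gamma>2\<close> \<open>gauge \<gamma>3\<close> gauge_Int by metis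
  then have "\<gamma>1 fine p" "\<gamma>2 fine p" "\<gamma>3 fine p" by (auto simp: fine_Int)
  note tag = tagged_division_of_realD[OF p]
  have increment: "content K * h' x - \<epsilon> * content K - (if x \<in> N then norm (F (Sup K) - F (Inf K)) else 0)
      \<le> F (Sup K) - F (Inf K)" if "(x, K) \<in> p" for x K
  proof (cases "x \<in> N")
    case True
    moreover have "0 \<le> \<epsilon> * (Sup K - Inf K)" using tag(2,3)[OF that] \<open>\<epsilon> > 0\<close> by simp
    ultimately show ?thesis
      using tag(5)[OF that] abs_ge_minus_self[of "F (Sup K) - F (Inf K)"] by (simp add: h'_def)
  next
    case False
    have "x \<in> {a..b}" using tagged_division_ofD(2,3)[OF p that] by auto
    with False have x: "x \<in> {a..b} - N" by simp
    have "K \<subseteq> \<gamma>3 x" using \<open>\<gamma>3 fine p\<close> that by (auto simp: fine_def)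
    then have "(F' x - \<epsilon>) * (Sup K - Inf K) \<le> F (Sup K) - F (Inf K)"
      using x tag(1-4)[OF that] by (intro \<gamma>3) auto
    moreover have "h x * (Sup K - Inf K) \<le> F' x * (Sup K - Inf K)"
      using le[OF x] tag(2,3)[OF that] by (intro mult_right_mono) auto
    ultimately show ?thesis
      unfolding tag(5)[OF that] h'_def using False by (simp add: algebra_simps)
  qed
  have "(\<Sum>(x, K)\<in>p. content K * h' x) - \<epsilon> * (\<Sum>(x, K)\<in>p. content K)
      - (\<Sum>(x, K)\<in>p. if x \<in> N then norm (F (Sup K) - F (Inf K)) else 0)
      \<le> (\<Sum>(x, K)\<in>p. F (Sup K) - F (Inf K))"
    using increment by (simp add: split_def sum_distrib_left flip: sum_subtractf) (rule sum_mono, auto)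
  moreover have "(\<Sum>(x, K)\<in>p. F (Sup K) - F (Inf K)) = F b - F a"
    by (rule additive_tagged_division_1[OF \<open>a \<le> b\<close> p])
  moreover have "\<epsilon> * (\<Sum>(x, K)\<in>p. content K) = \<epsilon> * (b - a)"
    using additive_content_tagged_division[of p a b] p \<open>a \<le> b\<close> by simp
  moreover have "I - \<epsilon> \<le> (\<Sum>(x, K)\<in>p. content K * h' x)"
    using \<gamma>1[rule_format, OF conjI[OF p \<open>\<gamma>1 fine p\<close>]] by (simp add: split_def abs_less_iff)
  ultimately show "I \<le> F b - F a + e"
    using \<gamma>2[OF p \<open>\<gamma>2 fine p\<close>] e_eq by linarith
qed

lemma integrable_sqrt_mult:
  fixes f g :: "real \<Rightarrow> real"
  assumes f: "f absolutely_integrable_on {a..b}" and g: "g absolutely_integrable_on {a..b}"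
  shows "(\<lambda>s. sqrt (f s * g s)) integrable_on {a..b}"
proof (rule measurable_bounded_by_integrable_imp_integrable_real)
  have "f \<in> borel_measurable (lebesgue_on {a..b})" "g \<in> borel_measurable (lebesgue_on {a..b})"
    using f g by (auto intro: absolutely_integrable_imp_borel_measurable)
  then show "(\<lambda>s. sqrt (f s * g s)) \<in> borel_measurable (lebesgue_on {a..b})"
    by measurable
  show "(\<lambda>s. \<bar>f s\<bar> + \<bar>g s\<bar>) integrable_on {a..b}"
    using f g unfolding absolutely_integrable_on_def by (intro integrable_add) auto
  show "\<bar>sqrt (f s * g s)\<bar> \<le> \<bar>f s\<bar> + \<bar>g s\<bar>" for s
    using arith_geo_mean_sqrt[of "\<bar>f s\<bar>" "\<bar>g s\<bar>"] by (simp add: real_sqrt_abs'[symmetric] abs_mult)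
qed auto

section \<open>Solutions of linear systems with Metzler coefficients\<close>

locale metzler_solution =
  fixes A :: "real \<Rightarrow> real^'n::{finite,linorder}^'n::{finite,linorder}"
    and x :: "real \<Rightarrow> real^'n::{finite,linorder}" and a b :: real and N :: "real set"
  assumes le: "a \<le> b"
    and integrable: "\<And>i j. (\<lambda>t. A t $ i $ j) absolutely_integrable_on {a..b}"
    and metzler: "\<And>t i j. t \<in> {a..b} \<Longrightarrow> i \<noteq> j \<Longrightarrow> 0 \<le> A t $ i $ j"
    and abs_cont: "abs_cont_on {a..b} x"
    and null: "negligible N"
    and deriv: "\<And>t. t \<in> {a..b} - N \<Longrightarrow> (x has_vector_derivative A t *v x t) (at t within {a..b})"
begin

lemma abs_cont_on_component: "{c..d} \<subseteq> {a..b} \<Longrightarrow> abs_cont_on {c..d} (\<lambda>t. x t $ i)"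
  using abs_cont_on_subset[OF abs_cont_on_vec_nth[OF abs_cont]] .

lemma ln_component_has_derivative:
  assumes t: "t \<in> {a..b} - N" and pos: "x t $ i > 0" and S: "S \<subseteq> {a..b}"
  shows "((\<lambda>s. ln (x s $ i)) has_real_derivative (A t *v x t) $ i / x t $ i) (at t within S)"
proof -
  have "((\<lambda>s. x s $ i) has_vector_derivative (A t *v x t) $ i) (at t within {a..b})"
    using bounded_linear.has_vector_derivative[OF bounded_linear_vec_nth deriv[OF t]] .
  then have "((\<lambda>s. x s $ i) has_real_derivative (A t *v x t) $ i) (at t within S)"
    using S by (auto simp: has_real_derivative_iff_has_vector_derivative intro: has_vector_derivative_within_subset)
  from DERIV_chain'[OF this DERIV_ln[OF pos]]
  have "((\<lambda>s. ln (x s $ i)) has_real_derivative inverse (x t $ i) * (A t *v x t) $ i) (at t within S)"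
    by (simp add: o_def)
  then show ?thesis by (simp add: divide_inverse mult.commute)
qed

lemma component_lower_bound:
  assumes s: "s \<in> {a..b}" and pos: "\<And>t j. t \<in> {a..s} \<Longrightarrow> x t $ j > 0"
  shows "x a $ i * exp (- integral {a..b} (\<lambda>t. \<bar>A t $ i $ i\<bar>)) \<le> x s $ i"
proof -
  have sub: "{a..s} \<subseteq> {a..b}" using s by auto
  have Aii: "(\<lambda>t. A t $ i $ i) absolutely_integrable_on {a..s}"
    using absolutely_integrable_on_subinterval[OF integrable sub] .
  have "integral {a..s} (\<lambda>t. A t $ i $ i) \<le> ln (x s $ i) - ln (x a $ i)"
  proof (rule has_integral_le_increment[where F = "\<lambda>t. ln (x t $ i)", OF _ _ null])
    show "a \<le> s" using s by simp
    show "abs_cont_on {a..s} (\<lambda>t. ln (x t $ i))"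
      using abs_cont_on_ln[OF abs_cont_on_component[OF sub]] pos by blast
    show "((\<lambda>t. ln (x t $ i)) has_real_derivative (A t *v x t) $ i / x t $ i) (at t within {a..s})"
      if "t \<in> {a..s} - N" for t
      using that sub pos by (intro ln_component_has_derivative) auto
    show "A t $ i $ i \<le> (A t *v x t) $ i / x t $ i" if "t \<in> {a..s} - N" for t
      using that sub pos metzler by (intro metzler_diag_le_quotient) auto
    show "((\<lambda>t. A t $ i $ i) has_integral integral {a..s} (\<lambda>t. A t $ i $ i)) {a..s}"
      using Aii by (auto simp: absolutely_integrable_on_def intro: integrable_integral)
  qed
  moreover have "- integral {a..b} (\<lambda>t. \<bar>A t $ i $ i\<bar>) \<le> integral {a..s} (\<lambda>t. A t $ i $ i)"
  proof -
    have "norm (integral {a..s} (\<lambda>t. A t $ i $ i)) \<le> integral {a..s} (\<lambda>t. \<bar>A t $ i $ i\<bar>)"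
      using Aii by (intro Henstock_Kurzweil_Integration.integral_norm_bound_integral)
        (auto simp: absolutely_integrable_on_def)
    also have "\<dots> \<le> integral {a..b} (\<lambda>t. \<bar>A t $ i $ i\<bar>)"
      using Aii integrable[of i i] sub by (intro integral_subset_le) (auto simp: absolutely_integrable_on_def)
    finally show ?thesis by (simp add: abs_le_iff)
  qed
  ultimately have "ln (x a $ i) - integral {a..b} (\<lambda>t. \<bar>A t $ i $ i\<bar>) \<le> ln (x s $ i)" by linarith
  then have "exp (ln (x a $ i) - integral {a..b} (\<lambda>t. \<bar>A t $ i $ i\<bar>)) \<le> exp (ln (x s $ i))"
    by simp
  then show ?thesis
    using pos[of a i] pos[of s i] s by (simp add: exp_diff exp_minus divide_inverse)
qed

lemma components_positive:
  assumes pos0: "\<And>j. x a $ j > 0" and t: "t \<in> {a..b}"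
  shows "x t $ i > 0"
proof (rule ccontr)
  assume "\<not> x t $ i > 0"
  define Z where "Z = {s \<in> {a..b}. \<exists>j. x s $ j \<le> 0}"
  have cont: "continuous_on {c..d} (\<lambda>t. x t $ j)" if "{c..d} \<subseteq> {a..b}" for c d j
    using abs_cont_on_imp_continuous_on[OF abs_cont_on_component[OF that]] .
  have "closed {s \<in> {a..b}. x s $ j \<le> 0}" for j
    by (intro continuous_on_closed_Collect_le cont[OF order_refl] continuous_on_const) auto
  moreover have "Z = (\<Union>j. {s \<in> {a..b}. x s $ j \<le> 0})" by (auto simp: Z_def)
  ultimately have "closed Z" by (simp add: closed_UN)
  moreover have "t \<in> Z" using t \<open>\<not> x t $ i > 0\<close> by (auto simp: Z_def not_less)
  moreover have "bdd_below Z" by (auto simp: Z_def intro: bdd_belowI[of _ a])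
  ultimately have "Inf Z \<in> Z" by (intro closed_contains_Inf) auto
  then obtain s j where s: "s \<in> {a..b}" and "s = Inf Z" and "x s $ j \<le> 0" by (auto simp: Z_def)
  have before: "x r $ k > 0" if "r \<in> {a..<s}" for r k
  proof (rule ccontr)
    assume "\<not> x r $ k > 0"
    then have "r \<in> Z" using that s by (auto simp: Z_def not_less)
    then have "s \<le> r" unfolding \<open>s = Inf Z\<close> by (rule cInf_lower) fact
    then show False using that by simp
  qed
  have "a < s" using s pos0[of j] \<open>x s $ j \<le> 0\<close> by (cases "a = s") auto
  define c where "c = x a $ j * exp (- integral {a..b} (\<lambda>t. \<bar>A t $ j $ j\<bar>))"
  have "c \<le> x r $ j" if "r \<in> {a..<s}" for r
    unfolding c_def using that s before by (intro component_lower_bound) auto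
  moreover have "continuous_on (closure {a..<s}) (\<lambda>t. x t $ j)"
    using \<open>a < s\<close> s by (simp add: cont)
  moreover have "s \<in> closure {a..<s}" using \<open>a < s\<close> by simp
  ultimately have "c \<le> x s $ j" by (metis continuous_ge_on_closure)
  moreover have "c > 0" using pos0 by (simp add: c_def)
  ultimately show False using \<open>x s $ j \<le> 0\<close> by simp
qed

lemma growth_bound_integrable: "(\<lambda>t. growth_bound (A t)) integrable_on {a..b}"
proof -
  have "(\<lambda>t. trace (A t)) integrable_on {a..b}"
    unfolding trace_def using integrable by (intro integrable_sum) (auto simp: absolutely_integrable_on_def)
  moreover have "(\<lambda>t. \<Sum>(j, k)\<in>{(j, k). j < k}. sqrt (A t $ j $ k * A t $ k $ j)) integrable_on {a..b}"
    by (intro integrable_sum) (auto simp: split_def intro!: integrable_sqrt_mult integrable)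
  ultimately show ?thesis
    unfolding growth_bound_def using integrable_on_cmult_left[of _ "{a..b}" 2] by (intro integrable_add) auto
qed

lemma prod_components_lower_bound:
  assumes pos0: "\<And>i. x a $ i > 0"
  shows "exp (integral {a..b} (\<lambda>t. growth_bound (A t))) * (\<Prod>i\<in>UNIV. x a $ i) \<le> (\<Prod>i\<in>UNIV. x b $ i)"
proof -
  define F where "F t = (\<Sum>i\<in>UNIV. ln (x t $ i))" for t
  have pos: "\<And>t i. t \<in> {a..b} \<Longrightarrow> x t $ i > 0"
    using components_positive[OF pos0] .
  have "integral {a..b} (\<lambda>t. growth_bound (A t)) \<le> F b - F a"
  proof (rule has_integral_le_increment[where F = F, OF le _ null])
    show "abs_cont_on {a..b} F"
      unfolding F_def using pos by (intro abs_cont_on_sum abs_cont_on_ln abs_cont_on_component) auto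
    show "(F has_real_derivative (\<Sum>i\<in>UNIV. (A t *v x t) $ i / x t $ i)) (at t within {a..b})"
      if "t \<in> {a..b} - N" for t
      unfolding F_def using that pos by (intro DERIV_sum ln_component_has_derivative) auto
    show "growth_bound (A t) \<le> (\<Sum>i\<in>UNIV. (A t *v x t) $ i / x t $ i)" if "t \<in> {a..b} - N" for t
      using that pos metzler by (intro growth_bound_le_sum_quotients) auto
  qed (rule integrable_integral[OF growth_bound_integrable])
  then have "exp (integral {a..b} (\<lambda>t. growth_bound (A t))) \<le> exp (F b) / exp (F a)"
    by (simp flip: exp_diff)
  moreover have "exp (F t) = (\<Prod>i\<in>UNIV. x t $ i)" if "t \<in> {a..b}" for t
    using pos[OF that] by (simp add: F_def exp_sum)
  moreover have "(\<Prod>i\<in>UNIV. x a $ i) > 0" using pos0 by (simp add: prod_pos)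
  ultimately show ?thesis using le by (simp add: pos_le_divide_eq)
qed

end

lemma atLeastAtMost_subset_open_ivl:
  "\<alpha> < ereal a \<Longrightarrow> ereal b < \<beta> \<Longrightarrow> {a..b} \<subseteq> open_ivl \<alpha> \<beta>"
  unfolding open_ivl_def by (auto intro: order_less_le_trans[of _ "ereal a"] order_le_less_trans[of _ "ereal b"])

lemma metzler_solution_of_caratheodory_solution:
  fixes A :: "real \<Rightarrow> real^'n::{finite,linorder}^'n::{finite,linorder}"
  assumes loc_int: "\<And>i j a b. {a..b} \<subseteq> open_ivl \<alpha> \<beta> \<Longrightarrow> (\<lambda>t. A t $ i $ j) absolutely_integrable_on {a..b}"
    and offdiag: "\<And>t i j. t \<in> open_ivl \<alpha> \<beta> \<Longrightarrow> i \<noteq> j \<Longrightarrow> A t $ i $ j \<ge> 0"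
    and sol: "caratheodory_solution \<alpha> \<beta> A t0 x0 x"
    and sub: "{a..b} \<subseteq> open_ivl \<alpha> \<beta>" and "a \<le> b"
  obtains N where "metzler_solution A x a b N"
proof -
  obtain N where "N \<in> null_sets lebesgue"
    and N: "\<And>s. s \<notin> N \<Longrightarrow> s \<in> open_ivl \<alpha> \<beta> \<Longrightarrow> (x has_vector_derivative A s *v x s) (at s)"
    using sol unfolding caratheodory_solution_def by (auto elim!: AE_E3)
  have "metzler_solution A x a b N"
  proof
    show "(\<lambda>s. A s $ i $ j) absolutely_integrable_on {a..b}" for i j
      using loc_int[OF sub] .
    show "0 \<le> A s $ i $ j" if "s \<in> {a..b}" "i \<noteq> j" for s i j
      using offdiag that sub by blast
    show "abs_cont_on {a..b} x"
      using sol sub by (simp add: caratheodory_solution_def)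
    show "negligible N"
      using \<open>N \<in> null_sets lebesgue\<close> negligible_iff_null_sets by blast
    show "(x has_vector_derivative A s *v x s) (at s within {a..b})" if "s \<in> {a..b} - N" for s
      using N that sub by (blast intro: has_vector_derivative_at_within)
  qed fact
  then show ?thesis by (rule that)
qed

theorem proposition1p1:
  fixes \<alpha> \<beta> :: ereal
    and A :: "real \<Rightarrow> real^('n::{finite,linorder})^('n::{finite,linorder})"
    and t0 :: real and x0 :: "real^('n::{finite,linorder})" and x :: "real \<Rightarrow> real^('n::{finite,linorder})"
  assumes "\<alpha> < \<beta>"
    and loc_int: "\<And>i j a b. {a..b} \<subseteq> open_ivl \<alpha> \<beta> \<Longrightarrow>
                     (\<lambda>t. A t $ i $ j) absolutely_integrable_on {a..b}"
    and offdiag: "\<And>t i j. t \<in> open_ivl \<alpha> \<beta> \<Longrightarrow> i \<noteq> j \<Longrightarrow> A t $ i $ j \<ge> 0"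
    and t0: "t0 \<in> open_ivl \<alpha> \<beta>"
    and x0: "\<And>i. x0 $ i > 0"
    and sol: "caratheodory_solution \<alpha> \<beta> A t0 x0 x"
  shows "\<forall>t. t0 < t \<and> ereal t < \<beta> \<longrightarrow>
           (\<Prod>i\<in>UNIV. x t $ i) \<ge>
           exp (integral {t0..t} (\<lambda>\<tau>. trace (A \<tau>) +
                 2 * (\<Sum>(j,k)\<in>{(j,k). j < k}. sqrt (A \<tau> $ j $ k * A \<tau> $ k $ j))))
           * (\<Prod>i\<in>UNIV. x t0 $ i)"
proof (intro allI impI)
  fix t assume t: "t0 < t \<and> ereal t < \<beta>"
  then have sub: "{t0..t} \<subseteq> open_ivl \<alpha> \<beta>"
    using t0 by (intro atLeastAtMost_subset_open_ivl) (auto simp: open_ivl_def)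
  have "t0 \<le> t" using t by simp
  obtain N where "metzler_solution A x t0 t N"
    using metzler_solution_of_caratheodory_solution[OF loc_int offdiag sol sub \<open>t0 \<le> t\<close>] .
  moreover have "x t0 = x0" using sol by (simp add: caratheodory_solution_def)
  ultimately have "exp (integral {t0..t} (\<lambda>\<tau>. growth_bound (A \<tau>))) * (\<Prod>i\<in>UNIV. x t0 $ i)
      \<le> (\<Prod>i\<in>UNIV. x t $ i)"
    using x0 by (intro metzler_solution.prod_components_lower_bound) simp_all
  then show "exp (integral {t0..t} (\<lambda>\<tau>. trace (A \<tau>) +
           2 * (\<Sum>(j,k)\<in>{(j,k). j < k}. sqrt (A \<tau> $ j $ k * A \<tau> $ k $ j)))) * (\<Prod>i\<in>UNIV. x t0 $ i)
      \<le> (\<Prod>i\<in>UNIV. x t $ i)"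
    by (simp add: growth_bound_def)
qed

end
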